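(* Assume that Hypotheses \textbf{H1} and \textbf{H2} hold. The steady states $\mathcal{E}_{00}^{02}$, $\mathcal{E}_{00}^{12}$, $\mathcal{E}_{10}^{12}$, $\mathcal{E}_{02}^{01}$, $\mathcal{E}_{02}^{11}$ and $\mathcal{E}_{12}^{11}$ of the system are unstable when they exist.
   Context: Consider the system of two interconnected chemostats in series \[ \begin{aligned} \dot{S}_1^1 &= D_1(S_1^{\text{in}}- S_1^1)-k_1\mu_1(S_1^1) X_1^1, & \dot{X}_1^1 &=(\mu_1(S_1^1) - \alpha D_1)X_1^1,\\ \dot{S}_2^1 &= D_1(S_2^{\text{in}}- S_2^1)+k_2\mu_1(S_1^1)X_1^1-k_3\mu_2(S_2^1) X_2^1, & \dot{X}_2^1 &=(\mu_2(S_2^1) - \alpha D_1)X_2^1,\\ \dot{S}_1^2 &= D_2(S_1^1- S_1^2)-k_1\mu_1(S_1^2) X_1^2, & \dot{X}_1^2 &= \alpha D_2(X_1^1- X_1^2)+\mu_1(S_1^2)X_1^2,\\ \dot{S}_2^2 &= D_2(S_2^1- S_2^2)+k_2\mu_1(S_1^2)X_1^2-k_3\mu_2(S_2^2) X_2^2, & \dot{X}_2^2 &= \alpha D_2(X_2^1- X_2^2)+\mu_2(S_2^2)X_2^2, \end{aligned} \] where $D_i=D/r_i$ with $r_1=r\in(0,1)$, $r_2=1-r$, $\alpha\in(0,1)$, and $k_1,k_2,k_3>0$. The growth functions are $\mathcal{C}^1(\mathbb{R}_+)$ and satisfy: \textbf{H1}: $\mu_1(0)=0$, $\mu_1(+\infty)=m_1$,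 $\mu_1'(S_1)>0$ for all $S_1>0$; \textbf{H2}: $\mu_2(0)=0$, $\mu_2(+\infty)=0$, and there exists $S_2^{\text{m}}>0$ with $\mu_2'>0$ on $(0,S_2^{\text{m}})$ and $\mu_2'<0$ on $(S_2^{\text{m}},\infty)$. Let $\lambda_1^i$ be the solution of $\mu_1(S_1)=\alpha D_i$ and $\lambda_2^{i1}<\lambda_2^{i2}$ the two solutions of $\mu_2(S_2)=\alpha D_i$, $i=1,2$. A steady state $\mathcal{E}_{ij}^{kl}$ is labeled as follows: the lower indices refer to reactor 1 and the upper to reactor 2; the first index is $1$ if the first biomass ($X_1^1$, resp. $X_1^2$) is positive and $0$ if it is zero; the second index is $0$ if the second biomass ($X_2^1$, resp. $X_2^2$) is zero and otherwise indicates the type of positive second biomass. Concretely: $\mathcal{E}_{00}^{02}$ has reactor 1 at washout $(S_1^{\text{in}},0,S_2^{\text{in}},0)$ and reactor 2 equal to $(S_1^{\text{in}},0,\lambda_2^{22},(S_2^{\text{in}}-\lambda_2^{22})/(\alpha k_3))$; $\mathcal{E}_{00}^{12}$ has reactor 1 at washout and reactor 2 equal to $(\lambda_1^2,(S_1^{\text{in}}-\lambda_1^2)/(\alpha k_1),\lambda_2^{22},X_2^2)$ with $X_2^2>0$; $\mathcal{E}_{10}^{12}$ has reactor 1 equal to $(\lambda_1^1,(S_1^{\text{in}}-\lambda_1^1)/(\alpha k_1),S_2^{\text{in}}+\tfrac{k_2}{k_1}(S_1^{\text{in}}-\lambda_1^1),0)$ and reactor 2 with $X_1^2>0$, $S_2^2=\lambda_2^{22}$,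 $X_2^2>0$; $\mathcal{E}_{02}^{01}$ and $\mathcal{E}_{02}^{11}$ have reactor 1 equal to $(S_1^{\text{in}},0,\lambda_2^{12},(S_2^{\text{in}}-\lambda_2^{12})/(\alpha k_3))$ and, in reactor 2, $X_1^2=0,X_2^2>0$ resp. $X_1^2>0,X_2^2>0$; $\mathcal{E}_{12}^{11}$ has reactor 1 equal to $(\lambda_1^1,(S_1^{\text{in}}-\lambda_1^1)/(\alpha k_1),\lambda_2^{12},X_2^1)$ with $X_2^1>0$, and in reactor 2 $X_1^2>0$, $X_2^2>0$. *)

theory Defs
  imports "HOL-Analysis.Analysis"
begin

text \<open>State vector of the two chemostats in series, as an element of real^8.
  Coordinate convention (indices of type 8):
  0 = S_1^1, 1 = X_1^1, 2 = S_2^1, 3 = X_2^1   (reactor 1)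
  4 = S_1^2, 5 = X_1^2, 6 = S_2^2, 7 = X_2^2   (reactor 2).\<close>

definition chemo_field ::
  "(real \<Rightarrow> real) \<Rightarrow> (real \<Rightarrow> real) \<Rightarrow> real \<Rightarrow> real \<Rightarrow> real \<Rightarrow>
   real \<Rightarrow> real \<Rightarrow> real \<Rightarrow> real \<Rightarrow> real \<Rightarrow> real^8 \<Rightarrow> real^8" where
  "chemo_field \<mu>1 \<mu>2 D r \<alpha> k1 k2 k3 S1in S2in x =
    (let D1 = D / r; D2 = D / (1 - r);
         S11 = x $ 0; X11 = x $ 1; S21 = x $ 2; X21 = x $ 3;
         S12 = x $ 4; X12 = x $ 5; S22 = x $ 6; X22 = x $ 7;
         f0 = D1 * (S1in - S11) - k1 * \<mu>1 S11 * X11;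
         f1 = (\<mu>1 S11 - \<alpha> * D1) * X11;
         f2 = D1 * (S2in - S21) + k2 * \<mu>1 S11 * X11 - k3 * \<mu>2 S21 * X21;
         f3 = (\<mu>2 S21 - \<alpha> * D1) * X21;
         f4 = D2 * (S11 - S12) - k1 * \<mu>1 S12 * X12;
         f5 = \<alpha> * D2 * (X11 - X12) + \<mu>1 S12 * X12;
         f6 = D2 * (S21 - S22) + k2 * \<mu>1 S12 * X12 - k3 * \<mu>2 S22 * X22;
         f7 = \<alpha> * D2 * (X21 - X22) + \<mu>2 S22 * X22
     in (\<chi> i. if i = 0 then f0 else if i = 1 then f1 else if i = 2 then f2
               else if i = 3 then f3 else if i = 4 then f4 else if i = 5 then f5
               else if i = 6 then f6 else f7))"

definition orthant8 :: "(real^8) set" where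
  "orthant8 = {x. \<forall>i. 0 \<le> x $ i}"

definition steady_state :: "(real^8 \<Rightarrow> real^8) \<Rightarrow> real^8 \<Rightarrow> bool" where
  "steady_state F E \<longleftrightarrow> E \<in> orthant8 \<and> F E = 0"

text \<open>Instability of a steady state in the sense used in the paper (linearisation):
  the Jacobian matrix of F at E has an eigenvalue with positive real part.\<close>
definition unstable_steady_state :: "(real^8 \<Rightarrow> real^8) \<Rightarrow> real^8 \<Rightarrow> bool" where
  "unstable_steady_state F E \<longleftrightarrow>
     (\<exists>L. (F has_derivative L) (at E within orthant8) \<and>
        (\<exists>(\<nu>::complex) (v::complex^8). v \<noteq> 0 \<and>
            (\<chi> i. \<Sum>j\<in>UNIV. complex_of_real (matrix L $ i $ j) * v $ j) = (\<chi> i. \<nu> * v $ i)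
            \<and> 0 < Re \<nu>))"

text \<open>s is the larger one (lambda_2^{i2}) of the two solutions of mu_2(S) = c.\<close>
definition larger_root :: "(real \<Rightarrow> real) \<Rightarrow> real \<Rightarrow> real \<Rightarrow> bool" where
  "larger_root \<mu>2 c s \<longleftrightarrow> \<mu>2 s = c \<and> (\<exists>s'. 0 < s' \<and> s' < s \<and> \<mu>2 s' = c)"

end

theory Submission
  imports Defs
begin

text \<open>Each of these steady states has, in some reactor i, the second species present with its
  substrate at the larger root of \<mu>2(S) = \<alpha> D_i, which lies on the decreasing branch of \<mu>2.
  The Jacobian is block lower triangular (reactor 1 drives reactor 2, not conversely), and its
  (S_2, X_2) block in reactor i is [[-D_i - k3 c, -k3 \<alpha> D_i], [c, 0]] with c = \<mu>2'(S_2) X_2 < 0.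
  This block has the negative determinant k3 \<alpha> D_i c, hence a positive eigenvalue, and the
  corresponding eigenvector extends to an eigenvector of the whole Jacobian.\<close>

lemma has_derivative_vec_componentwise:
  fixes f :: "real^'n \<Rightarrow> real^'m"
  assumes "\<And>i. ((\<lambda>x. f x $ i) has_derivative (\<lambda>h. f' h $ i)) (at a within S)"
  shows "(f has_derivative f') (at a within S)"
  unfolding has_derivative_componentwise_within[of f]
  using assms by (auto simp: Basis_vec_def cart_eq_inner_axis[symmetric])

lemma matrix_row_sum_eq:
  fixes L :: "real^'n \<Rightarrow> real^'m"
  assumes "linear L"
  shows "(\<Sum>j\<in>UNIV. matrix L $ i $ j * v $ j) = L v $ i"
proof -
  have "Vector_Spaces.linear (*s) (*s) L"
    using assms by (simp add: linear_matrix_vector_mul_eq)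
  from matrix_works[OF this, of v] show ?thesis
    by (simp add: matrix_vector_mult_def vec_eq_iff)
qed

lemma unstable_steady_stateI:
  fixes F L :: "real^8 \<Rightarrow> real^8"
  assumes deriv: "(F has_derivative L) (at E within orthant8)"
    and "v \<noteq> 0" and eigen: "L v = \<nu> *\<^sub>R v" and "0 < \<nu>"
  shows "unstable_steady_state F E"
proof -
  define w where "w = (\<chi> i. complex_of_real (v $ i))"
  have "w \<noteq> 0"
    using \<open>v \<noteq> 0\<close> by (auto simp: w_def vec_eq_iff)
  moreover have "(\<chi> i. \<Sum>j\<in>UNIV. complex_of_real (matrix L $ i $ j) * w $ j) =
      (\<chi> i. complex_of_real \<nu> * w $ i)"
    using matrix_row_sum_eq[OF has_derivative_linear[OF deriv]] eigen
    by (simp add: w_def vec_eq_iff flip: of_real_mult of_real_sum)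
  ultimately show ?thesis
    unfolding unstable_steady_state_def using deriv \<open>0 < \<nu>\<close> by force
qed

definition vec8 :: "real \<Rightarrow> real \<Rightarrow> real \<Rightarrow> real \<Rightarrow> real \<Rightarrow> real \<Rightarrow> real \<Rightarrow> real \<Rightarrow> real^8" where
  "vec8 a0 a1 a2 a3 a4 a5 a6 a7 = (\<chi> i. if i = 0 then a0 else if i = 1 then a1 else if i = 2 then a2
     else if i = 3 then a3 else if i = 4 then a4 else if i = 5 then a5 else if i = 6 then a6 else a7)"

lemma vec8_nth [simp]:
  "vec8 a0 a1 a2 a3 a4 a5 a6 a7 $ 0 = a0" "vec8 a0 a1 a2 a3 a4 a5 a6 a7 $ 1 = a1"
  "vec8 a0 a1 a2 a3 a4 a5 a6 a7 $ 2 = a2" "vec8 a0 a1 a2 a3 a4 a5 a6 a7 $ 3 = a3"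
  "vec8 a0 a1 a2 a3 a4 a5 a6 a7 $ 4 = a4" "vec8 a0 a1 a2 a3 a4 a5 a6 a7 $ 5 = a5"
  "vec8 a0 a1 a2 a3 a4 a5 a6 a7 $ 6 = a6" "vec8 a0 a1 a2 a3 a4 a5 a6 a7 $ 7 = a7"
  by (simp_all add: vec8_def)

lemma vec8_eq_iff:
  "vec8 a0 a1 a2 a3 a4 a5 a6 a7 = vec8 b0 b1 b2 b3 b4 b5 b6 b7 \<longleftrightarrow>
    a0 = b0 \<and> a1 = b1 \<and> a2 = b2 \<and> a3 = b3 \<and> a4 = b4 \<and> a5 = b5 \<and> a6 = b6 \<and> a7 = b7"
  by (metis vec8_nth)

lemma vec8_scaleR:
  "c *\<^sub>R vec8 a0 a1 a2 a3 a4 a5 a6 a7 = vec8 (c*a0) (c*a1) (c*a2) (c*a3) (c*a4) (c*a5) (c*a6) (c*a7)"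
  by (simp add: vec8_def vec_eq_iff)

lemma vec8_zero: "vec8 0 0 0 0 0 0 0 0 = 0"
  by (simp add: vec8_def vec_eq_iff)

lemma vec8_eq_0_iff:
  "vec8 a0 a1 a2 a3 a4 a5 a6 a7 = 0 \<longleftrightarrow>
    a0 = 0 \<and> a1 = 0 \<and> a2 = 0 \<and> a3 = 0 \<and> a4 = 0 \<and> a5 = 0 \<and> a6 = 0 \<and> a7 = 0"
  unfolding vec8_zero[symmetric] vec8_eq_iff ..

definition chemo_jacobian ::
  "(real \<Rightarrow> real) \<Rightarrow> (real \<Rightarrow> real) \<Rightarrow> (real \<Rightarrow> real) \<Rightarrow> (real \<Rightarrow> real) \<Rightarrow>
   real \<Rightarrow> real \<Rightarrow> real \<Rightarrow> real \<Rightarrow> real \<Rightarrow> real \<Rightarrow> real^8 \<Rightarrow> real^8 \<Rightarrow> real^8" where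
  "chemo_jacobian \<mu>1 \<mu>2 \<mu>1' \<mu>2' D1 D2 \<alpha> k1 k2 k3 E h = vec8
    (- D1 * h$0 - k1 * (\<mu>1' (E$0) * h$0 * E$1 + \<mu>1 (E$0) * h$1))
    (\<mu>1' (E$0) * h$0 * E$1 + (\<mu>1 (E$0) - \<alpha> * D1) * h$1)
    (- D1 * h$2 + k2 * (\<mu>1' (E$0) * h$0 * E$1 + \<mu>1 (E$0) * h$1)
       - k3 * (\<mu>2' (E$2) * h$2 * E$3 + \<mu>2 (E$2) * h$3))
    (\<mu>2' (E$2) * h$2 * E$3 + (\<mu>2 (E$2) - \<alpha> * D1) * h$3)
    (D2 * (h$0 - h$4) - k1 * (\<mu>1' (E$4) * h$4 * E$5 + \<mu>1 (E$4) * h$5))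
    (\<alpha> * D2 * (h$1 - h$5) + \<mu>1' (E$4) * h$4 * E$5 + \<mu>1 (E$4) * h$5)
    (D2 * (h$2 - h$6) + k2 * (\<mu>1' (E$4) * h$4 * E$5 + \<mu>1 (E$4) * h$5)
       - k3 * (\<mu>2' (E$6) * h$6 * E$7 + \<mu>2 (E$6) * h$7))
    (\<alpha> * D2 * (h$3 - h$7) + \<mu>2' (E$6) * h$6 * E$7 + \<mu>2 (E$6) * h$7)"

lemma chemo_field_has_derivative:
  assumes E: "E \<in> orthant8"
    and \<mu>1_deriv: "\<And>s. 0 \<le> s \<Longrightarrow> (\<mu>1 has_real_derivative \<mu>1' s) (at s within {0..})"
    and \<mu>2_deriv: "\<And>s. 0 \<le> s \<Longrightarrow> (\<mu>2 has_real_derivative \<mu>2' s) (at s within {0..})"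
  shows "(chemo_field \<mu>1 \<mu>2 D r \<alpha> k1 k2 k3 S1in S2in has_derivative
      chemo_jacobian \<mu>1 \<mu>2 \<mu>1' \<mu>2' (D/r) (D/(1-r)) \<alpha> k1 k2 k3 E) (at E within orthant8)"
proof -
  have nth: "((\<lambda>x. x$k) has_derivative (\<lambda>h. h$k)) (at E within orthant8)" for k
    by (rule bounded_linear.has_derivative[OF bounded_linear_vec_nth has_derivative_ident])
  have nth_nonneg: "(\<lambda>x. x$k) ` orthant8 \<subseteq> {0..}" for k
    by (auto simp: orthant8_def)
  have \<mu>1_nth: "((\<lambda>x. \<mu>1 (x$k)) has_derivative (\<lambda>h. \<mu>1' (E$k) * h$k)) (at E within orthant8)" for k
    using has_derivative_in_compose2[of "{0..}" \<mu>1 "\<lambda>s h. \<mu>1' s * h", OF _ nth_nonneg E nth]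
      \<mu>1_deriv by (simp add: has_field_derivative_imp_has_derivative)
  have \<mu>2_nth: "((\<lambda>x. \<mu>2 (x$k)) has_derivative (\<lambda>h. \<mu>2' (E$k) * h$k)) (at E within orthant8)" for k
    using has_derivative_in_compose2[of "{0..}" \<mu>2 "\<lambda>s h. \<mu>2' s * h", OF _ nth_nonneg E nth]
      \<mu>2_deriv by (simp add: has_field_derivative_imp_has_derivative)
  \<comment> \<open>Abstracting the dilution rates keeps the simplifier from normalising the quotients.\<close>
  obtain D1 D2 where D1: "D/r = D1" and D2: "D/(1-r) = D2"
    by blast
  show ?thesis
  proof (rule has_derivative_vec_componentwise)
    fix i :: 8
    consider "i = 0" | "i = 1" | "i = 2" | "i = 3" | "i = 4" | "i = 5" | "i = 6"
      | "i \<noteq> 0 \<and> i \<noteq> 1 \<and> i \<noteq> 2 \<and> i \<noteq> 3 \<and> i \<noteq> 4 \<and> i \<noteq> 5 \<and> i \<noteq> 6"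
      by blast
    then show "((\<lambda>x. chemo_field \<mu>1 \<mu>2 D r \<alpha> k1 k2 k3 S1in S2in x $ i) has_derivative
        (\<lambda>h. chemo_jacobian \<mu>1 \<mu>2 \<mu>1' \<mu>2' (D/r) (D/(1-r)) \<alpha> k1 k2 k3 E h $ i)) (at E within orthant8)"
      unfolding chemo_field_def chemo_jacobian_def Let_def vec8_def D1 D2
      by cases (simp_all, (auto intro!: derivative_eq_intros \<mu>1_nth \<mu>2_nth nth simp: algebra_simps))
  qed
qed

lemma quadratic_has_positive_root:
  fixes a p :: real
  assumes "0 < p"
  shows "\<exists>\<nu>>0. \<nu>\<^sup>2 = a * \<nu> + p"
proof -
  define q where "q = sqrt (a\<^sup>2 + 4 * p)"
  have q_sq: "q\<^sup>2 = a\<^sup>2 + 4 * p"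
    unfolding q_def using assms by (simp add: add_nonneg_pos)
  have "\<bar>a\<bar> < q"
    unfolding q_def using assms real_sqrt_less_mono[of "a\<^sup>2" "a\<^sup>2 + 4 * p"] by simp
  then have "0 < (a + q) / 2" by simp
  moreover have "((a + q) / 2)\<^sup>2 = a * ((a + q) / 2) + p"
    using q_sq by (simp add: power2_eq_square field_simps)
  ultimately show ?thesis by blast
qed

lemma saddle_block_positive_eigenvalue:
  fixes D k3 \<alpha> c :: real
  assumes "0 < D" "0 < k3" "0 < \<alpha>" "c < 0"
  shows "\<exists>\<nu>>0. \<nu>\<^sup>2 = (- D - k3 * c) * \<nu> - k3 * \<alpha> * D * c"
proof -
  have "0 < - (k3 * \<alpha> * D * c)"
    using assms by (simp add: mult_pos_neg)
  from quadratic_has_positive_root[OF this] show ?thesis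
    by simp
qed

lemma homogeneous_2x3_nontrivial_solution:
  fixes a b c d p q :: real
  shows "\<exists>t u v. (t \<noteq> 0 \<or> u \<noteq> 0 \<or> v \<noteq> 0) \<and> a * u + b * v = t * p \<and> c * u + d * v = t * q"
proof (cases "a * d - b * c = 0")
  case False
  then show ?thesis
    by (intro exI[of _ "a * d - b * c"] exI[of _ "p * d - b * q"] exI[of _ "a * q - c * p"])
      (simp add: algebra_simps)
next
  case singular: True
  consider "a \<noteq> 0 \<or> b \<noteq> 0" | "c \<noteq> 0 \<or> d \<noteq> 0" | "a = 0 \<and> b = 0 \<and> c = 0 \<and> d = 0"
    by blast
  then show ?thesis
  proof cases
    case 1
    with singular show ?thesis
      by (intro exI[of _ 0] exI[of _ "-b"] exI[of _ a]) (auto simp: algebra_simps)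
  next
    case 2
    with singular show ?thesis
      by (intro exI[of _ 0] exI[of _ "-d"] exI[of _ c]) (auto simp: algebra_simps)
  next
    case 3
    then show ?thesis
      by (intro exI[of _ 0] exI[of _ 1] exI[of _ 0]) simp
  qed
qed

lemma larger_root_gt_maximizer:
  fixes \<mu>2 \<mu>2' :: "real \<Rightarrow> real"
  assumes \<mu>2_deriv: "\<And>s. 0 \<le> s \<Longrightarrow> (\<mu>2 has_real_derivative \<mu>2' s) (at s within {0..})"
    and increasing: "\<And>s. 0 < s \<Longrightarrow> s < S2m \<Longrightarrow> 0 < \<mu>2' s"
    and "larger_root \<mu>2 c s"
  shows "S2m < s"
proof (rule ccontr)
  assume "\<not> S2m < s"
  from \<open>larger_root \<mu>2 c s\<close> obtain s' where s': "0 < s'" "s' < s" "\<mu>2 s' = \<mu>2 s"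
    unfolding larger_root_def by auto
  have "(\<mu>2 has_real_derivative \<mu>2' x) (at x)" if "s' \<le> x" "x \<le> s" for x
    using \<mu>2_deriv[of x] s' that at_within_interior[of x "{0..}"] by simp
  from MVT2[OF \<open>s' < s\<close> this] obtain z where "s' < z" "z < s" "\<mu>2 s - \<mu>2 s' = (s - s') * \<mu>2' z"
    by auto
  moreover have "0 < \<mu>2' z"
    using increasing[of z] \<open>s' < z\<close> \<open>z < s\<close> \<open>\<not> S2m < s\<close> s' by simp
  ultimately show False
    using s' by simp
qed

lemma chemo_field_unstable_reactor2:
  assumes E: "E \<in> orthant8"
    and \<mu>1_deriv: "\<And>s. 0 \<le> s \<Longrightarrow> (\<mu>1 has_real_derivative \<mu>1' s) (at s within {0..})"
    and \<mu>2_deriv: "\<And>s. 0 \<le> s \<Longrightarrow> (\<mu>2 has_real_derivative \<mu>2' s) (at s within {0..})"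
    and on_root: "\<mu>2 (E$6) = \<alpha> * (D/(1-r))" and decreasing: "\<mu>2' (E$6) < 0" and "0 < E$7"
    and "0 < k3" "0 < \<alpha>" "0 < D/(1-r)"
  shows "unstable_steady_state (chemo_field \<mu>1 \<mu>2 D r \<alpha> k1 k2 k3 S1in S2in) E"
proof -
  define D1 D2 where "D1 = D/r" and "D2 = D/(1-r)"
  define c where "c = \<mu>2' (E$6) * E$7"
  have "c < 0"
    unfolding c_def using decreasing \<open>0 < E$7\<close> by (simp add: mult_neg_pos)
  then obtain \<nu> where "0 < \<nu>" and char: "\<nu>\<^sup>2 = (- D2 - k3 * c) * \<nu> - k3 * \<alpha> * D2 * c"
    using saddle_block_positive_eigenvalue \<open>0 < k3\<close> \<open>0 < \<alpha>\<close> \<open>0 < D/(1-r)\<close>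
    unfolding D2_def by blast
  let ?v = "vec8 0 0 0 0 0 0 \<nu> c"
  have "chemo_jacobian \<mu>1 \<mu>2 \<mu>1' \<mu>2' D1 D2 \<alpha> k1 k2 k3 E ?v = \<nu> *\<^sub>R ?v"
    unfolding chemo_jacobian_def vec8_scaleR vec8_eq_iff vec8_nth
    using char on_root[folded D2_def] unfolding c_def by (simp add: power2_eq_square algebra_simps)
  moreover have "?v \<noteq> 0"
    using \<open>0 < \<nu>\<close> by (simp add: vec8_eq_0_iff)
  ultimately show ?thesis
    using unstable_steady_stateI[OF chemo_field_has_derivative[OF E \<mu>1_deriv \<mu>2_deriv] _ _ \<open>0 < \<nu>\<close>]
    unfolding D1_def D2_def by blast
qed

lemma chemo_field_unstable_reactor1:
  assumes E: "E \<in> orthant8"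
    and \<mu>1_deriv: "\<And>s. 0 \<le> s \<Longrightarrow> (\<mu>1 has_real_derivative \<mu>1' s) (at s within {0..})"
    and \<mu>2_deriv: "\<And>s. 0 \<le> s \<Longrightarrow> (\<mu>2 has_real_derivative \<mu>2' s) (at s within {0..})"
    and on_root: "\<mu>2 (E$2) = \<alpha> * (D/r)" and decreasing: "\<mu>2' (E$2) < 0" and "0 < E$3"
    and "0 < k3" "0 < \<alpha>" "0 < D/r"
  shows "unstable_steady_state (chemo_field \<mu>1 \<mu>2 D r \<alpha> k1 k2 k3 S1in S2in) E"
proof -
  define D1 D2 where "D1 = D/r" and "D2 = D/(1-r)"
  define c where "c = \<mu>2' (E$2) * E$3"
  have "c < 0"
    unfolding c_def using decreasing \<open>0 < E$3\<close> by (simp add: mult_neg_pos)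
  then obtain \<nu> where "0 < \<nu>" and char: "\<nu>\<^sup>2 = (- D1 - k3 * c) * \<nu> - k3 * \<alpha> * D1 * c"
    using saddle_block_positive_eigenvalue \<open>0 < k3\<close> \<open>0 < \<alpha>\<close> \<open>0 < D/r\<close>
    unfolding D1_def by blast
  define p q where "p = \<mu>2' (E$6) * E$7" and "q = \<mu>2 (E$6)"
  \<comment> \<open>Completes the eigenvector in reactor 2; a solution with t = 0 is instead an eigenvector
    of the reactor-2 block, needed when \<nu> is also one of its eigenvalues.\<close>
  obtain t u6 u7 where nontrivial: "t \<noteq> 0 \<or> u6 \<noteq> 0 \<or> u7 \<noteq> 0"
    and row6: "(\<nu> + D2 + k3 * p) * u6 + (k3 * q) * u7 = t * (D2 * \<nu>)"
    and row7: "(- p) * u6 + (\<nu> + \<alpha> * D2 - q) * u7 = t * (\<alpha> * D2 * c)"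
    using homogeneous_2x3_nontrivial_solution[where a = "\<nu> + D2 + k3 * p" and b = "k3 * q"
        and p = "D2 * \<nu>" and c = "- p" and d = "\<nu> + \<alpha> * D2 - q" and q = "\<alpha> * D2 * c"]
    by blast
  let ?v = "vec8 0 0 (t * \<nu>) (t * c) 0 0 u6 u7"
  have "chemo_jacobian \<mu>1 \<mu>2 \<mu>1' \<mu>2' D1 D2 \<alpha> k1 k2 k3 E ?v = \<nu> *\<^sub>R ?v"
    unfolding chemo_jacobian_def vec8_scaleR vec8_eq_iff vec8_nth
    using char on_root[folded D1_def] row6 row7 unfolding c_def p_def q_def power2_eq_square
    by algebra
  moreover have "?v \<noteq> 0"
    using nontrivial \<open>c < 0\<close> by (auto simp: vec8_eq_0_iff)
  ultimately show ?thesis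
    using unstable_steady_stateI[OF chemo_field_has_derivative[OF E \<mu>1_deriv \<mu>2_deriv] _ _ \<open>0 < \<nu>\<close>]
    unfolding D1_def D2_def by blast
qed

theorem proposition4:
  fixes \<mu>1 \<mu>2 \<mu>1' \<mu>2' :: "real \<Rightarrow> real"
    and D r \<alpha> k1 k2 k3 S1in S2in m1 S2m :: real
  assumes D_pos: "0 < D" and r_range: "0 < r" "r < 1"
    and \<alpha>_range: "0 < \<alpha>" "\<alpha> < 1"
    and k_pos: "0 < k1" "0 < k2" "0 < k3"
    and Sin_nonneg: "0 \<le> S1in" "0 \<le> S2in"
    \<comment> \<open>H1\<close>
    and H1_C1: "\<And>s. 0 \<le> s \<Longrightarrow> (\<mu>1 has_real_derivative \<mu>1' s) (at s within {0..})"
    and H1_cont: "continuous_on {0..} \<mu>1'"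
    and H1_zero: "\<mu>1 0 = 0"
    and H1_lim: "(\<mu>1 \<longlongrightarrow> m1) at_top"
    and H1_incr: "\<And>s. 0 < s \<Longrightarrow> 0 < \<mu>1' s"
    \<comment> \<open>H2\<close>
    and H2_C1: "\<And>s. 0 \<le> s \<Longrightarrow> (\<mu>2 has_real_derivative \<mu>2' s) (at s within {0..})"
    and H2_cont: "continuous_on {0..} \<mu>2'"
    and H2_zero: "\<mu>2 0 = 0"
    and H2_lim: "(\<mu>2 \<longlongrightarrow> 0) at_top"
    and H2_Sm: "0 < S2m"
    and H2_up: "\<And>s. 0 < s \<Longrightarrow> s < S2m \<Longrightarrow> 0 < \<mu>2' s"
    and H2_down: "\<And>s. S2m < s \<Longrightarrow> \<mu>2' s < 0"
  shows
   "let F = chemo_field \<mu>1 \<mu>2 D r \<alpha> k1 k2 k3 S1in S2in;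
        D1 = D / r; D2 = D / (1 - r) in
    \<comment> \<open>E_00^02\<close>
    (\<forall>E. steady_state F E \<and>
         E $ 0 = S1in \<and> E $ 1 = 0 \<and> E $ 2 = S2in \<and> E $ 3 = 0 \<and>
         E $ 4 = S1in \<and> E $ 5 = 0 \<and> larger_root \<mu>2 (\<alpha> * D2) (E $ 6) \<and>
         E $ 7 = (S2in - E $ 6) / (\<alpha> * k3) \<and> 0 < E $ 7
       \<longrightarrow> unstable_steady_state F E) \<and>
    \<comment> \<open>E_00^12\<close>
    (\<forall>E. steady_state F E \<and>
         E $ 0 = S1in \<and> E $ 1 = 0 \<and> E $ 2 = S2in \<and> E $ 3 = 0 \<and>
         \<mu>1 (E $ 4) = \<alpha> * D2 \<and> E $ 5 = (S1in - E $ 4) / (\<alpha> * k1) \<and> 0 < E $ 5 \<and>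
         larger_root \<mu>2 (\<alpha> * D2) (E $ 6) \<and> 0 < E $ 7
       \<longrightarrow> unstable_steady_state F E) \<and>
    \<comment> \<open>E_10^12\<close>
    (\<forall>E. steady_state F E \<and>
         \<mu>1 (E $ 0) = \<alpha> * D1 \<and> E $ 1 = (S1in - E $ 0) / (\<alpha> * k1) \<and> 0 < E $ 1 \<and>
         E $ 2 = S2in + k2 / k1 * (S1in - E $ 0) \<and> E $ 3 = 0 \<and>
         0 < E $ 5 \<and> larger_root \<mu>2 (\<alpha> * D2) (E $ 6) \<and> 0 < E $ 7
       \<longrightarrow> unstable_steady_state F E) \<and>
    \<comment> \<open>E_02^01\<close>
    (\<forall>E. steady_state F E \<and>
         E $ 0 = S1in \<and> E $ 1 = 0 \<and> larger_root \<mu>2 (\<alpha> * D1) (E $ 2) \<and>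
         E $ 3 = (S2in - E $ 2) / (\<alpha> * k3) \<and> 0 < E $ 3 \<and>
         E $ 5 = 0 \<and> 0 < E $ 7
       \<longrightarrow> unstable_steady_state F E) \<and>
    \<comment> \<open>E_02^11\<close>
    (\<forall>E. steady_state F E \<and>
         E $ 0 = S1in \<and> E $ 1 = 0 \<and> larger_root \<mu>2 (\<alpha> * D1) (E $ 2) \<and>
         E $ 3 = (S2in - E $ 2) / (\<alpha> * k3) \<and> 0 < E $ 3 \<and>
         0 < E $ 5 \<and> 0 < E $ 7
       \<longrightarrow> unstable_steady_state F E) \<and>
    \<comment> \<open>E_12^11\<close>
    (\<forall>E. steady_state F E \<and>
         \<mu>1 (E $ 0) = \<alpha> * D1 \<and> E $ 1 = (S1in - E $ 0) / (\<alpha> * k1) \<and> 0 < E $ 1 \<and>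
         larger_root \<mu>2 (\<alpha> * D1) (E $ 2) \<and> 0 < E $ 3 \<and>
         0 < E $ 5 \<and> 0 < E $ 7
       \<longrightarrow> unstable_steady_state F E)"
proof -
  have "0 < D/r" "0 < D/(1-r)"
    using D_pos r_range by simp_all
  have decreasing_at_larger_root: "\<mu>2' s < 0" if "larger_root \<mu>2 c s" for c s
    using H2_down larger_root_gt_maximizer[OF H2_C1 H2_up that] by blast
  have "unstable_steady_state (chemo_field \<mu>1 \<mu>2 D r \<alpha> k1 k2 k3 S1in S2in) E"
    if "E \<in> orthant8" "larger_root \<mu>2 (\<alpha> * (D/r)) (E$2)" "0 < E$3" for E
    using chemo_field_unstable_reactor1[OF that(1) H1_C1 H2_C1] that decreasing_at_larger_root
      k_pos \<alpha>_range \<open>0 < D/r\<close> unfolding larger_root_def by blast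
  moreover have "unstable_steady_state (chemo_field \<mu>1 \<mu>2 D r \<alpha> k1 k2 k3 S1in S2in) E"
    if "E \<in> orthant8" "larger_root \<mu>2 (\<alpha> * (D/(1-r))) (E$6)" "0 < E$7" for E
    using chemo_field_unstable_reactor2[OF that(1) H1_C1 H2_C1] that decreasing_at_larger_root
      k_pos \<alpha>_range \<open>0 < D/(1-r)\<close> unfolding larger_root_def by blast
  ultimately show ?thesis
    unfolding Let_def steady_state_def by blast
qed

end
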